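(* For $\alpha=(\alpha_1,\dots,\alpha_r)$ with $1\ge\alpha_1\ge\dots\ge\alpha_r\ge0$ and $\sum_{i=1}^r\alpha_i=1$ (where $r$ may vary), let $H(\alpha)=-\sum_{i=1}^r\alpha_i\log\alpha_i$ and $H'(\alpha)=-\sum_{i=2}^r\alpha_i\log\alpha_i$. Then $$\lim_{\alpha_1\uparrow 1}\frac{H'(\alpha)}{H(\alpha)}=1\qquad\text{and}\qquad\lim_{\alpha_1\downarrow 0}\frac{H'(\alpha)}{H(\alpha)}=1,$$ uniformly over the remaining coordinates.
   Context: $\log$ is the natural logarithm, with the convention $0\log 0=0$. *)

theory Defs
  imports Complex_Main
begin

definition sorted_prob_vec :: "nat \<Rightarrow> (nat \<Rightarrow> real) \<Rightarrow> bool" where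
  "sorted_prob_vec r a \<longleftrightarrow> r \<ge> 1 \<and> a 1 \<le> 1 \<and> (\<forall>i\<in>{1..r}. 0 \<le> a i)
     \<and> (\<forall>i j. 1 \<le> i \<longrightarrow> i \<le> j \<longrightarrow> j \<le> r \<longrightarrow> a j \<le> a i)
     \<and> (\<Sum>i=1..r. a i) = 1"

text \<open>Entropy; the convention 0 log 0 = 0 holds automatically since 0 * ln 0 = 0.\<close>
definition entropy :: "nat \<Rightarrow> (nat \<Rightarrow> real) \<Rightarrow> real" where
  "entropy r a = - (\<Sum>i=1..r. a i * ln (a i))"

definition entropy' :: "nat \<Rightarrow> (nat \<Rightarrow> real) \<Rightarrow> real" where
  "entropy' r a = - (\<Sum>i=2..r. a i * ln (a i))"

end

theory Submission
  imports Defs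
begin

text \<open>Write \<open>h x = - x ln x\<close>, so that \<open>H = h \<alpha>\<^sub>1 + H'\<close> and \<open>\<bar>H'/H - 1\<bar> = h \<alpha>\<^sub>1 / H\<close>; it suffices
  to show that \<open>h \<alpha>\<^sub>1\<close> is negligible against \<open>H\<close>. Every weight is at most the largest one \<open>m\<close>,
  so a block of weights of total mass \<open>s\<close> contributes at least \<open>s (- ln m)\<close> to the entropy.
  As \<open>\<alpha>\<^sub>1 \<rightarrow> 1\<close>, the tail has mass \<open>c = 1 - \<alpha>\<^sub>1\<close> and weights at most \<open>c\<close>, so \<open>H' \<ge> c (- ln c)\<close>,
  whereas \<open>h \<alpha>\<^sub>1 \<le> c\<close>; hence \<open>h \<alpha>\<^sub>1 / H \<le> 1 / (- ln c)\<close>, which is below \<open>\<epsilon>\<close> once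
  \<open>c < exp (- 1 / \<epsilon>)\<close>. As \<open>\<alpha>\<^sub>1 \<rightarrow> 0\<close>, \<open>H \<ge> - ln \<alpha>\<^sub>1\<close> whereas \<open>h \<alpha>\<^sub>1 = \<alpha>\<^sub>1 (- ln \<alpha>\<^sub>1)\<close>.\<close>

lemma neg_mult_ln_nonneg:
  fixes x :: real
  assumes "0 \<le> x" "x \<le> 1"
  shows "0 \<le> - (x * ln x)"
  using assms by (cases "x = 0") (auto simp: mult_nonneg_nonpos)

lemma neg_mult_ln_le_one_minus:
  fixes x :: real
  assumes "0 < x"
  shows "- (x * ln x) \<le> 1 - x"
proof -
  have "ln (1 / x) \<le> 1 / x - 1"
    using assms by (intro ln_le_minus_one) simp
  then have "x * (1 - 1 / x) \<le> x * ln x"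
    using assms by (intro mult_left_mono) (auto simp: ln_div)
  then show ?thesis
    using assms by (simp add: algebra_simps)
qed

lemma neg_sum_mult_ln_ge:
  fixes a :: "'b \<Rightarrow> real"
  assumes bounded: "\<And>i. i \<in> S \<Longrightarrow> 0 \<le> a i \<and> a i \<le> c" and "0 < c"
  shows "(\<Sum>i\<in>S. a i) * (- ln c) \<le> - (\<Sum>i\<in>S. a i * ln (a i))"
proof -
  have "a i * (- ln c) \<le> - (a i * ln (a i))" if "i \<in> S" for i
  proof (cases "a i = 0")
    case False
    then have "ln (a i) \<le> ln c"
      using bounded[OF that] \<open>0 < c\<close> by simp
    then show ?thesis
      using bounded[OF that] by (simp add: mult_left_mono)
  qed simp
  then show ?thesis
    by (simp add: sum_distrib_right sum_negf[symmetric] sum_mono)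
qed

lemma entropy_split:
  assumes "r \<ge> 1"
  shows "entropy r a = - (a 1 * ln (a 1)) + entropy' r a"
proof -
  have "{1..r} = insert 1 {2..r}"
    using assms by auto
  then show ?thesis
    unfolding entropy_def entropy'_def by simp
qed

lemma sorted_prob_vec_tail_sum:
  assumes "sorted_prob_vec r a"
  shows "(\<Sum>i=2..r. a i) = 1 - a 1"
proof -
  have "{1..r} = insert 1 {2..r}"
    using assms by (auto simp: sorted_prob_vec_def)
  then show ?thesis
    using assms by (simp add: sorted_prob_vec_def)
qed

lemma entropy'_ge_tail_mass:
  assumes "sorted_prob_vec r a" "a 1 < 1"
  shows "(1 - a 1) * (- ln (1 - a 1)) \<le> entropy' r a"
proof -
  have "0 \<le> a i \<and> a i \<le> 1 - a 1" if "i \<in> {2..r}" for i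
  proof -
    have "0 \<le> a i"
      using assms(1) that by (simp add: sorted_prob_vec_def)
    moreover have "a i \<le> (\<Sum>j=2..r. a j)"
      using assms(1) that by (intro member_le_sum) (auto simp: sorted_prob_vec_def)
    ultimately show ?thesis
      using sorted_prob_vec_tail_sum[OF assms(1)] by simp
  qed
  from neg_sum_mult_ln_ge[of "{2..r}" a "1 - a 1", OF this] show ?thesis
    using assms sorted_prob_vec_tail_sum[OF assms(1)] unfolding entropy'_def by simp
qed

lemma entropy_ge_neg_ln_max:
  assumes "sorted_prob_vec r a" "0 < a 1"
  shows "- ln (a 1) \<le> entropy r a"
proof -
  have "0 \<le> a i \<and> a i \<le> a 1" if "i \<in> {1..r}" for i
    using assms(1) that by (auto simp: sorted_prob_vec_def)
  from neg_sum_mult_ln_ge[of "{1..r}" a "a 1", OF this] show ?thesis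
    using assms unfolding entropy_def sorted_prob_vec_def by simp
qed

lemma ratio_close_to_one:
  fixes h H' \<epsilon> :: real
  assumes "0 < \<epsilon>" "0 \<le> h" "h < \<epsilon> * (h + H')"
  shows "\<bar>H' / (h + H') - 1\<bar> < \<epsilon>"
proof -
  have "0 < \<epsilon> * (h + H')"
    using assms(2,3) by linarith
  then have "0 < h + H'"
    using assms(1) by (rule zero_less_mult_pos)
  then have "\<bar>H' / (h + H') - 1\<bar> = h / (h + H')"
    using assms(2) by (simp add: field_simps)
  also have "\<dots> < \<epsilon>"
    using assms(3) \<open>0 < h + H'\<close> by (simp add: divide_less_eq mult.commute)
  finally show ?thesis .
qed

lemma entropy_ratio_close_to_one:
  assumes "sorted_prob_vec r a" "0 < \<epsilon>" "- (a 1 * ln (a 1)) < \<epsilon> * entropy r a"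
  shows "\<bar>entropy' r a / entropy r a - 1\<bar> < \<epsilon>"
proof -
  have "r \<ge> 1" "0 \<le> a 1" "a 1 \<le> 1"
    using assms(1) by (auto simp: sorted_prob_vec_def)
  then show ?thesis
    using assms(2,3) ratio_close_to_one[OF assms(2) neg_mult_ln_nonneg]
    by (simp add: entropy_split)
qed

lemma first_weight_negligible_near_one:
  assumes "sorted_prob_vec r a" "0 < \<epsilon>" "1 - exp (- 1 / \<epsilon>) < a 1" "a 1 < 1"
  shows "- (a 1 * ln (a 1)) < \<epsilon> * entropy r a"
proof -
  define c where "c = 1 - a 1"
  have "0 < c" "c < exp (- 1 / \<epsilon>)"
    using assms by (auto simp: c_def)
  then have "1 / \<epsilon> < - ln c"
    using ln_less_cancel_iff[of c "exp (- 1 / \<epsilon>)"] by simp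
  have "exp (- 1 / \<epsilon>) \<le> 1"
    using \<open>0 < \<epsilon>\<close> by simp
  then have "0 < a 1"
    using assms(3) by linarith
  then have "- (a 1 * ln (a 1)) \<le> c"
    unfolding c_def by (rule neg_mult_ln_le_one_minus)
  also have "c = \<epsilon> * (c * (1 / \<epsilon>))"
    using \<open>0 < \<epsilon>\<close> by simp
  also have "\<dots> < \<epsilon> * (c * (- ln c))"
    using \<open>0 < \<epsilon>\<close> \<open>0 < c\<close> \<open>1 / \<epsilon> < - ln c\<close> by (intro mult_strict_left_mono) auto
  also have "\<dots> \<le> \<epsilon> * entropy r a"
  proof -
    have "c * (- ln c) \<le> entropy' r a"
      unfolding c_def using assms(1,4) by (rule entropy'_ge_tail_mass)
    also have "\<dots> \<le> entropy r a"
      using assms(1,4) \<open>0 < a 1\<close> neg_mult_ln_nonneg[of "a 1"]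
      by (simp add: entropy_split sorted_prob_vec_def)
    finally show ?thesis
      using \<open>0 < \<epsilon>\<close> by (intro mult_left_mono) auto
  qed
  finally show ?thesis .
qed

lemma first_weight_negligible_near_zero:
  assumes "sorted_prob_vec r a" "0 < a 1" "a 1 < \<epsilon>" "a 1 < 1"
  shows "- (a 1 * ln (a 1)) < \<epsilon> * entropy r a"
proof -
  have "0 < - ln (a 1)"
    using assms by simp
  then have "- (a 1 * ln (a 1)) < \<epsilon> * (- ln (a 1))"
    using assms(3) by (simp add: mult_strict_right_mono)
  also have "\<dots> \<le> \<epsilon> * entropy r a"
    using assms(2,3) by (intro mult_left_mono entropy_ge_neg_ln_max[OF assms(1,2)]) simp
  finally show ?thesis .
qed

theorem lemma1:
  shows "(\<forall>\<epsilon>>0. \<exists>\<delta>>0. \<forall>r a. sorted_prob_vec r a \<and> 1 - \<delta> < a 1 \<and> a 1 < 1 \<longrightarrow>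
            \<bar>entropy' r a / entropy r a - 1\<bar> < \<epsilon>)
       \<and> (\<forall>\<epsilon>>0. \<exists>\<delta>>0. \<forall>r a. sorted_prob_vec r a \<and> 0 < a 1 \<and> a 1 < \<delta> \<longrightarrow>
            \<bar>entropy' r a / entropy r a - 1\<bar> < \<epsilon>)"
proof (intro conjI allI impI)
  fix \<epsilon> :: real
  assume "0 < \<epsilon>"
  show "\<exists>\<delta>>0. \<forall>r a. sorted_prob_vec r a \<and> 1 - \<delta> < a 1 \<and> a 1 < 1 \<longrightarrow>
      \<bar>entropy' r a / entropy r a - 1\<bar> < \<epsilon>"
  proof (intro exI[of _ "exp (- 1 / \<epsilon>)"] conjI allI impI)
    fix r a
    assume "sorted_prob_vec r a \<and> 1 - exp (- 1 / \<epsilon>) < a 1 \<and> a 1 < 1"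
    with \<open>0 < \<epsilon>\<close> show "\<bar>entropy' r a / entropy r a - 1\<bar> < \<epsilon>"
      by (blast intro: entropy_ratio_close_to_one first_weight_negligible_near_one)
  qed simp
next
  fix \<epsilon> :: real
  assume "0 < \<epsilon>"
  show "\<exists>\<delta>>0. \<forall>r a. sorted_prob_vec r a \<and> 0 < a 1 \<and> a 1 < \<delta> \<longrightarrow>
      \<bar>entropy' r a / entropy r a - 1\<bar> < \<epsilon>"
  proof (intro exI[of _ "min \<epsilon> 1"] conjI allI impI)
    fix r a
    assume "sorted_prob_vec r a \<and> 0 < a 1 \<and> a 1 < min \<epsilon> 1"
    then have "sorted_prob_vec r a" "0 < a 1" "a 1 < \<epsilon>" "a 1 < 1"
      by auto
    then show "\<bar>entropy' r a / entropy r a - 1\<bar> < \<epsilon>"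
      using \<open>0 < \<epsilon>\<close> by (intro entropy_ratio_close_to_one first_weight_negligible_near_zero)
  qed (simp add: \<open>0 < \<epsilon>\<close>)
qed

end
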